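(* Let $D=\sum_{s=1}^N\gamma_s\varpi_{i_s}[x_s]+\mu[\infty]$ be a $\Lambda^+$-valued divisor satisfying the integrality assumption, with $1\le i_N\le n-1$ (so $\gamma_N=1$), and let $D'=\sum_{s=1}^{N-1}\gamma_s\varpi_{i_s}[x_s]+(\mu+\varpi_{i_N})[\infty]$. Let $(-x_N)^{\varpi_{i_N}}$ denote the diagonal matrix $\mathrm{diag}(1,\dots,1,-x_N^{-1},\dots,-x_N^{-1})$ with $i_N$ entries equal to $1$ and $n-i_N$ entries equal to $-x_N^{-1}$. Then, treating $x_N$ as a parameter, the limit as $x_N\to\infty$ of $T_D(z)\cdot(-x_N)^{\varpi_{i_N}}$ (taken coefficientwise in the expansion in $z^{-1}$) equals $T_{D'}(z)$.
   Context: Let $n\ge2$, $\Lambda=\bigoplus_{j=1}^n\mathbb{Z}\epsilon_j$, $\epsilon^\vee_j$ dual basis, $\alpha^\vee_i=\epsilon^\vee_i-\epsilon^\vee_{i+1}$, $\alpha_i=\epsilon_i-\epsilon_{i+1}$, $\varpi_i=-\sum_{j=i+1}^n\epsilon_j$ ($0\le i\le n-1$), $\Lambda^+=\{\nu:\alpha^\vee_i(\nu)\ge0,\ 1\le i<n\}$. A $\Lambda^+$-valued divisor is $D=\sum_{s=1}^N\gamma_s\varpi_{i_s}[x_s]+\mu[\infty]$ with $0\le i_s\le n-1$, $x_s\in\mathbb{C}$, $\gamma_s=1$ if $i_s\ne0$, $\gamma_s\in\{\pm1\}$ if $i_s=0$, $\mu\in\Lambda^+$. Integrality assumption: with $\lambda=\sum_s\gamma_s\varpi_{i_s}$,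 $\lambda+\mu=\sum_{i=1}^{n-1}a_i\alpha_i$, $a_i\in\mathbb{Z}_{\ge0}$; $a_0=a_n=0$ (note $D$ and $D'$ give the same $a_i$). $\mathcal{A}$: the $\mathbb{C}$-algebra generated by $p_{i,r},e^{\pm q_{i,r}},(p_{i,r}-p_{i,s}+m)^{-1}$ ($1\le i<n$, $1\le r\ne s\le a_i$, $m\in\mathbb{Z}$) with $[e^{\pm q_{i,r}},p_{j,s}]=\mp\delta_{ij}\delta_{rs}e^{\pm q_{i,r}}$, $p$'s commuting, $e^q$'s commuting, $e^{\pm q_{i,r}}e^{\mp q_{i,r}}=1$. $Z_i(z)=\prod_{s:i_s=i}(z-x_s)^{\gamma_s}$, $P_j(z)=\prod_{r=1}^{a_j}(z-p_{j,r})$, $P_{j,r}(z)=\prod_{s\ne r}(z-p_{j,s})$, $P_0=P_n=1$. For such $D$, $T_D(z)\in\mathcal{A}((z^{-1}))\otimes\mathrm{End}\,\mathbb{C}^n$ is defined by $T_D(z)_{\alpha\beta}=\sum_{i=1}^{\min(\alpha,\beta)}f^D_{\alpha i}(z)g^D_i(z)e^D_{i\beta}(z)$, where (expanded in $z^{-1}$) $g^D_i(z)=\frac{P_i(z)}{P_{i-1}(z-1)}\prod_{k=0}^{i-1}Z_k(z)$, $e^D_{ii}=f^D_{ii}=1$ and for $i<j$: $e^D_{ij}(z)=-\sum_{r_i,\dots,r_{j-1}}\frac{P_{i-1}(p_{i,r_i}-1)\prod_{k=i}^{j-2}P_{k,r_k}(p_{k+1,r_{k+1}}-1)}{(z-p_{i,r_i})\prod_{k=i}^{j-1}P_{k,r_k}(p_{k,r_k})}\prod_{k=i}^{j-1}Z_k(p_{k,r_k})\,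 e^{\sum_{k=i}^{j-1}q_{k,r_k}}$, $f^D_{ji}(z)=\sum_{r_i,\dots,r_{j-1}}\frac{P_j(p_{j-1,r_{j-1}}+1)\prod_{k=i+1}^{j-1}P_{k,r_k}(p_{k-1,r_{k-1}}+1)}{(z-p_{i,r_i}-1)\prod_{k=i}^{j-1}P_{k,r_k}(p_{k,r_k})}\, e^{-\sum_{k=i}^{j-1}q_{k,r_k}}$ (sums over $1\le r_k\le a_k$); the $Z_k$ are those of the divisor in question. *)

theory Defs
  imports "HOL-Analysis.Analysis" "HOL-Computational_Algebra.Formal_Laurent_Series"
    "HOL-Library.FuncSet"
begin

(* Weights in Lambda = Z^n are functions nat => int; coordinate j (1 <= j <= n)
   is the coefficient of epsilon_j. *)

definition varpi :: "nat \<Rightarrow> nat \<Rightarrow> nat \<Rightarrow> int" where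
  "varpi n i j = (if i < j \<and> j \<le> n then -1 else 0)"

definition alpha :: "nat \<Rightarrow> nat \<Rightarrow> int" where
  "alpha i j = (if j = i then 1 else if j = i + 1 then -1 else 0)"

definition dominant :: "nat \<Rightarrow> (nat \<Rightarrow> int) \<Rightarrow> bool" where
  "dominant n \<nu> \<longleftrightarrow> (\<forall>i\<in>{1..<n}. \<nu> i - \<nu> (i + 1) \<ge> 0)"

(* A divisor sum_s gamma_s varpi_{i_s}[x_s] + mu[infinity] is given by the list of
   triples (gamma_s, i_s, x_s), s = 1..N, and mu. *)
definition is_divisor :: "nat \<Rightarrow> (int \<times> nat \<times> complex) list \<Rightarrow> (nat \<Rightarrow> int) \<Rightarrow> bool" where
  "is_divisor n pts mu \<longleftrightarrow>
     (\<forall>(\<gamma>, i, x) \<in> set pts. i \<le> n - 1 \<and> (i \<noteq> 0 \<longrightarrow> \<gamma> = 1) \<and> (i = 0 \<longrightarrow> \<gamma> = 1 \<or> \<gamma> = -1))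
     \<and> dominant n mu"

definition lam :: "nat \<Rightarrow> (int \<times> nat \<times> complex) list \<Rightarrow> nat \<Rightarrow> int" where
  "lam n pts j = (\<Sum>(\<gamma>, i, x) \<leftarrow> pts. \<gamma> * varpi n i j)"

definition integrality :: "nat \<Rightarrow> (int \<times> nat \<times> complex) list \<Rightarrow> (nat \<Rightarrow> int) \<Rightarrow> bool" where
  "integrality n pts mu \<longleftrightarrow>
     (\<exists>a :: nat \<Rightarrow> int. (\<forall>i\<in>{1..<n}. a i \<ge> 0) \<and>
        (\<forall>j\<in>{1..n}. lam n pts j + mu j = (\<Sum>i\<in>{1..<n}. a i * alpha i j)))"

definition acoef :: "nat \<Rightarrow> (int \<times> nat \<times> complex) list \<Rightarrow> (nat \<Rightarrow> int) \<Rightarrow> nat \<Rightarrow> nat" where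
  "acoef n pts mu = (\<lambda>i. nat ((THE a :: nat \<Rightarrow> int. (\<forall>i. i \<notin> {1..<n} \<longrightarrow> a i = 0) \<and>
        (\<forall>j\<in>{1..n}. lam n pts j + mu j = (\<Sum>i\<in>{1..<n}. a i * alpha i j))) i))"

(* Elements of the algebra A are written in normal form sum_k c_k(p) e^{k.q}
   (all e^q's to the right); c_k are rational functions of the p_{i,r}, which we
   evaluate at a numerical point p :: nat => nat => complex (p i r = value of p_{i,r}).
   A shift vector k :: nat => nat => int records the exponent of e^{q_{i,r}}. *)
definition generic :: "nat \<Rightarrow> (nat \<Rightarrow> nat) \<Rightarrow> (nat \<Rightarrow> nat \<Rightarrow> complex) \<Rightarrow> bool" where
  "generic n a p \<longleftrightarrow> (\<forall>i\<in>{1..<n}. \<forall>r\<in>{1..a i}. \<forall>s\<in>{1..a i}. r \<noteq> s \<longrightarrow> p i r - p i s \<notin> \<int>)"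

definition Pn :: "(nat \<Rightarrow> nat) \<Rightarrow> (nat \<Rightarrow> nat \<Rightarrow> complex) \<Rightarrow> nat \<Rightarrow> complex \<Rightarrow> complex" where
  "Pn a p j z = (\<Prod>r\<in>{1..a j}. (z - p j r))"

definition Pnr :: "(nat \<Rightarrow> nat) \<Rightarrow> (nat \<Rightarrow> nat \<Rightarrow> complex) \<Rightarrow> nat \<Rightarrow> nat \<Rightarrow> complex \<Rightarrow> complex" where
  "Pnr a p j r z = (\<Prod>s\<in>{1..a j} - {r}. (z - p j s))"

definition Zn :: "(int \<times> nat \<times> complex) list \<Rightarrow> nat \<Rightarrow> complex \<Rightarrow> complex" where
  "Zn pts k z = prod_list (map (\<lambda>(\<gamma>, i, x). if i = k then (z - x) powi \<gamma> else 1) pts)"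

(* the variable z as a Laurent series in z^{-1}: the series variable X stands for z^{-1} *)
abbreviation zz :: "complex fls" where "zz \<equiv> fls_X_inv"

definition Pf :: "(nat \<Rightarrow> nat) \<Rightarrow> (nat \<Rightarrow> nat \<Rightarrow> complex) \<Rightarrow> nat \<Rightarrow> complex \<Rightarrow> complex fls" where
  "Pf a p j c = (\<Prod>r\<in>{1..a j}. (zz - fls_const (p j r + c)))"

definition Zf :: "(int \<times> nat \<times> complex) list \<Rightarrow> nat \<Rightarrow> complex fls" where
  "Zf pts k = prod_list (map (\<lambda>(\<gamma>, i, x). if i = k then (zz - fls_const x) powi \<gamma> else 1) pts)"

definition gf :: "(nat \<Rightarrow> nat) \<Rightarrow> (int \<times> nat \<times> complex) list \<Rightarrow> (nat \<Rightarrow> nat \<Rightarrow> complex) \<Rightarrow> nat \<Rightarrow> complex fls" where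
  "gf a pts p i = Pf a p i 0 / Pf a p (i - 1) 1 * (\<Prod>k\<in>{0..<i}. Zf pts k)"

definition tuples :: "(nat \<Rightarrow> nat) \<Rightarrow> nat \<Rightarrow> nat \<Rightarrow> (nat \<Rightarrow> nat) set" where
  "tuples a i j = PiE {i..<j} (\<lambda>k. {1..a k})"

(* the exponent vector of e^{sum_{k=i}^{j-1} q_{k,r_k}} *)
definition chi :: "nat \<Rightarrow> nat \<Rightarrow> (nat \<Rightarrow> nat) \<Rightarrow> nat \<Rightarrow> nat \<Rightarrow> int" where
  "chi i j r = (\<lambda>k s. if i \<le> k \<and> k < j \<and> s = r k then 1 else 0)"

definition padd :: "(nat \<Rightarrow> nat \<Rightarrow> complex) \<Rightarrow> (nat \<Rightarrow> nat \<Rightarrow> int) \<Rightarrow> nat \<Rightarrow> nat \<Rightarrow> complex" where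
  "padd p c = (\<lambda>k s. p k s + of_int (c k s))"

(* scalar part (coefficient of e^{sum q_{k,r_k}}) of the (r_i..r_{j-1})-summand of e^D_{ij}(z), i<j *)
definition Eterm :: "(nat \<Rightarrow> nat) \<Rightarrow> (int \<times> nat \<times> complex) list \<Rightarrow> (nat \<Rightarrow> nat \<Rightarrow> complex)
    \<Rightarrow> nat \<Rightarrow> nat \<Rightarrow> (nat \<Rightarrow> nat) \<Rightarrow> complex fls" where
  "Eterm a pts p i j r = (if i = j then 1 else
     fls_const (- (Pn a p (i - 1) (p i (r i) - 1) *
                   (\<Prod>k\<in>{i..<j - 1}. Pnr a p k (r k) (p (k + 1) (r (k + 1)) - 1)))
                / (\<Prod>k\<in>{i..<j}. Pnr a p k (r k) (p k (r k)))
                * (\<Prod>k\<in>{i..<j}. Zn pts k (p k (r k))))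
     * inverse (zz - fls_const (p i (r i))))"

(* scalar part (coefficient of e^{-sum q_{k,r_k}}) of the (r_i..r_{j-1})-summand of f^D_{ji}(z), i<j *)
definition Fterm :: "(nat \<Rightarrow> nat) \<Rightarrow> (nat \<Rightarrow> nat \<Rightarrow> complex)
    \<Rightarrow> nat \<Rightarrow> nat \<Rightarrow> (nat \<Rightarrow> nat) \<Rightarrow> complex fls" where
  "Fterm a p j i r = (if i = j then 1 else
     fls_const ((Pn a p j (p (j - 1) (r (j - 1)) + 1) *
                 (\<Prod>k\<in>{i + 1..<j}. Pnr a p k (r k) (p (k - 1) (r (k - 1)) + 1)))
                / (\<Prod>k\<in>{i..<j}. Pnr a p k (r k) (p k (r k))))
     * inverse (zz - fls_const (p i (r i) + 1)))"

(* Tent n pts mu p alpha beta k : the coefficient of e^{k.q} (normal ordered, e^q on the right)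
   of T_D(z)_{alpha beta} = sum_i f_{alpha i} g_i e_{i beta}, as a Laurent series in z^{-1},
   evaluated at the point p.  Uses e^{-Q} S(p) = S(p + chi) e^{-Q}. *)
definition Tent :: "nat \<Rightarrow> (int \<times> nat \<times> complex) list \<Rightarrow> (nat \<Rightarrow> int) \<Rightarrow> (nat \<Rightarrow> nat \<Rightarrow> complex)
    \<Rightarrow> nat \<Rightarrow> nat \<Rightarrow> (nat \<Rightarrow> nat \<Rightarrow> int) \<Rightarrow> complex fls" where
  "Tent n pts mu p \<alpha> \<beta> k = (let a = acoef n pts mu in
     (\<Sum>i\<in>{1..min \<alpha> \<beta>}. \<Sum>rf\<in>tuples a i \<alpha>. \<Sum>re\<in>tuples a i \<beta>.
        if (\<lambda>u v. chi i \<beta> re u v - chi i \<alpha> rf u v) = k then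
          Fterm a p \<alpha> i rf * gf a pts (padd p (chi i \<alpha> rf)) i
            * Eterm a pts (padd p (chi i \<alpha> rf)) i \<beta> re
        else 0))"

definition diagent :: "nat \<Rightarrow> complex \<Rightarrow> nat \<Rightarrow> complex" where
  "diagent i x \<beta> = (if \<beta> \<le> i then 1 else - inverse x)"

end

theory Submission
  imports Defs
begin

(* Appending the point (1, i_N, x) to a divisor only multiplies Z_{i_N} by (z - x): it does not
   change lambda + mu, hence not the a_i.  So g_i acquires the factor z - x for i > i_N, the
   e-summands with i <= i_N < beta acquire the scalar factor p_{i_N, r_{i_N}} - x, and nothing
   else moves.  For beta <= i_N the entry is therefore unchanged, while for beta > i_N every
   summand, hence the entry, is affine in x with slope -T_{D'}(z)_{alpha beta}.  Multiplying by
   -1/x leaves T_{D'}(z)_{alpha beta} plus a term O(1/x). *)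

lemma Zf_snoc:
  "Zf (pts @ [(\<gamma>, l, x)]) k = Zf pts k * (if k = l then (zz - fls_const x) powi \<gamma> else 1)"
  by (simp add: Zf_def)

lemma Zn_snoc:
  "Zn (pts @ [(\<gamma>, l, x)]) k z = Zn pts k z * (if k = l then (z - x) powi \<gamma> else 1)"
  by (simp add: Zn_def)

lemma lam_snoc: "lam n (pts @ [(\<gamma>, l, x)]) j = lam n pts j + \<gamma> * varpi n l j"
  by (simp add: lam_def)

lemma acoef_snoc:
  "acoef n (pts @ [(1, l, x)]) mu = acoef n pts (\<lambda>j. mu j + varpi n l j)"
  unfolding acoef_def lam_snoc by (simp add: algebra_simps)

lemma gf_snoc:
  "gf a (pts @ [(\<gamma>, l, x)]) q i = gf a pts q i * (if l < i then (zz - fls_const x) powi \<gamma> else 1)"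
proof -
  have "(\<Prod>k\<in>{0..<i}. Zf (pts @ [(\<gamma>, l, x)]) k)
      = (\<Prod>k\<in>{0..<i}. Zf pts k) * (\<Prod>k\<in>{0..<i}. if k = l then (zz - fls_const x) powi \<gamma> else 1)"
    by (simp add: Zf_snoc prod.distrib)
  also have "(\<Prod>k\<in>{0..<i}. if k = l then (zz - fls_const x) powi \<gamma> else 1)
      = (if l < i then (zz - fls_const x) powi \<gamma> else 1)"
    by (subst prod.delta) auto
  finally show ?thesis by (simp add: gf_def mult.assoc)
qed

lemma Eterm_snoc:
  "Eterm a (pts @ [(\<gamma>, l, x)]) q i j r
   = Eterm a pts q i j r * (if i \<le> l \<and> l < j then fls_const ((q l (r l) - x) powi \<gamma>) else 1)"
proof (cases "i = j")
  case True
  then show ?thesis by (auto simp: Eterm_def)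
next
  case False
  have "(\<Prod>k\<in>{i..<j}. Zn (pts @ [(\<gamma>, l, x)]) k (q k (r k)))
      = (\<Prod>k\<in>{i..<j}. Zn pts k (q k (r k))) * (\<Prod>k\<in>{i..<j}. if k = l then (q k (r k) - x) powi \<gamma> else 1)"
    by (simp add: Zn_snoc prod.distrib)
  also have "(\<Prod>k\<in>{i..<j}. if k = l then (q k (r k) - x) powi \<gamma> else 1)
      = (if i \<le> l \<and> l < j then (q l (r l) - x) powi \<gamma> else 1)"
    by (subst prod.delta) auto
  finally have Zn_prod: "(\<Prod>k\<in>{i..<j}. Zn (pts @ [(\<gamma>, l, x)]) k (q k (r k)))
      = (\<Prod>k\<in>{i..<j}. Zn pts k (q k (r k))) * (if i \<le> l \<and> l < j then (q l (r l) - x) powi \<gamma> else 1)" .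
  have const_split: "fls_const (u * (v * w)) = fls_const (u * v) * fls_const w" for u v w :: complex
    by (simp only: fls_const_mult_const mult.assoc)
  show ?thesis
    using False unfolding Eterm_def Zn_prod const_split if_distrib[of fls_const] fls_const_1
    by (simp only: if_False mult_ac)
qed

definition Tent_summand :: "(nat \<Rightarrow> nat) \<Rightarrow> (int \<times> nat \<times> complex) list \<Rightarrow> (nat \<Rightarrow> nat \<Rightarrow> complex)
    \<Rightarrow> nat \<Rightarrow> nat \<Rightarrow> (nat \<Rightarrow> nat \<Rightarrow> int) \<Rightarrow> nat \<Rightarrow> (nat \<Rightarrow> nat) \<Rightarrow> (nat \<Rightarrow> nat) \<Rightarrow> complex fls" where
  "Tent_summand a pts p \<alpha> \<beta> k i rf re =
     (if (\<lambda>u v. chi i \<beta> re u v - chi i \<alpha> rf u v) = k then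
        Fterm a p \<alpha> i rf * gf a pts (padd p (chi i \<alpha> rf)) i * Eterm a pts (padd p (chi i \<alpha> rf)) i \<beta> re
      else 0)"

lemma Tent_eq_sum_Tent_summand:
  "Tent n pts mu p \<alpha> \<beta> k =
     (\<Sum>i\<in>{1..min \<alpha> \<beta>}. \<Sum>rf\<in>tuples (acoef n pts mu) i \<alpha>. \<Sum>re\<in>tuples (acoef n pts mu) i \<beta>.
        Tent_summand (acoef n pts mu) pts p \<alpha> \<beta> k i rf re)"
  by (simp add: Tent_def Tent_summand_def Let_def)

lemma Tent_summand_snoc:
  "Tent_summand a (pts @ [(1, l, x)]) p \<alpha> \<beta> k i rf re
   = Tent_summand a pts p \<alpha> \<beta> k i rf re *
     ((if l < i then zz - fls_const x else 1) *
      (if i \<le> l \<and> l < \<beta> then fls_const (padd p (chi i \<alpha> rf) l (re l) - x) else 1))"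
  by (simp add: Tent_summand_def gf_snoc Eterm_snoc mult_ac)

lemma Tent_summand_snoc_affine:
  assumes "i \<le> \<beta>" and "l < \<beta>"
  shows "Tent_summand a (pts @ [(1, l, x)]) p \<alpha> \<beta> k i rf re
    = Tent_summand a (pts @ [(1, l, 0)]) p \<alpha> \<beta> k i rf re - fls_const x * Tent_summand a pts p \<alpha> \<beta> k i rf re"
proof -
  \<comment> \<open>At most one of the two factors differs from 1, as \<open>l < i\<close> and \<open>i \<le> l\<close> exclude each other.\<close>
  have factor: "(if l < i then zz - fls_const y else 1) * (if i \<le> l \<and> l < \<beta> then fls_const (c - y) else 1)
      = (if l < i then zz else fls_const c) - fls_const y" for y c :: complex
    using assms by (auto simp: fls_minus_const[symmetric] simp del: fls_const_uminus)
  show ?thesis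
    unfolding Tent_summand_snoc factor by (simp add: algebra_simps)
qed

lemma Tent_snoc_below:
  assumes "\<beta> \<le> l"
  shows "Tent n (pts @ [(1, l, x)]) mu p \<alpha> \<beta> k = Tent n pts (\<lambda>j. mu j + varpi n l j) p \<alpha> \<beta> k"
proof -
  have "Tent_summand a (pts @ [(1, l, x)]) p \<alpha> \<beta> k i rf re = Tent_summand a pts p \<alpha> \<beta> k i rf re"
    if "i \<in> {1..min \<alpha> \<beta>}" for a i rf re
    using that assms by (simp add: Tent_summand_snoc)
  then show ?thesis
    unfolding Tent_eq_sum_Tent_summand acoef_snoc by (intro sum.cong refl)
qed

lemma Tent_snoc_affine:
  assumes "l < \<beta>"
  shows "Tent n (pts @ [(1, l, x)]) mu p \<alpha> \<beta> k
    = Tent n (pts @ [(1, l, 0)]) mu p \<alpha> \<beta> k - fls_const x * Tent n pts (\<lambda>j. mu j + varpi n l j) p \<alpha> \<beta> k"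
proof -
  have "Tent_summand a (pts @ [(1, l, x)]) p \<alpha> \<beta> k i rf re
      = Tent_summand a (pts @ [(1, l, 0)]) p \<alpha> \<beta> k i rf re - fls_const x * Tent_summand a pts p \<alpha> \<beta> k i rf re"
    if "i \<in> {1..min \<alpha> \<beta>}" for a i rf re
    using that assms by (intro Tent_summand_snoc_affine) auto
  then show ?thesis
    unfolding Tent_eq_sum_Tent_summand acoef_snoc sum_distrib_left sum_subtractf[symmetric]
    by (intro sum.cong refl)
qed

lemma tendsto_at_infinity_const_minus_inverse:
  fixes f :: "'a::real_normed_field \<Rightarrow> 'a"
  assumes "\<forall>\<^sub>F x in at_infinity. f x = c - inverse x * d"
  shows "(f \<longlongrightarrow> c) at_infinity"
proof -
  have "((\<lambda>x. c - inverse x * d) \<longlongrightarrow> c - 0 * d) at_infinity"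
    by (intro tendsto_intros tendsto_inverse_0)
  then show ?thesis
    using assms by (simp add: tendsto_cong)
qed

lemma Tent_snoc_diagent_nth_above:
  assumes "l < \<beta>" and "x \<noteq> 0"
  shows "fls_nth (Tent n (pts @ [(1, l, x)]) mu p \<alpha> \<beta> k * fls_const (diagent l x \<beta>)) m
    = fls_nth (Tent n pts (\<lambda>j. mu j + varpi n l j) p \<alpha> \<beta> k) m
      - inverse x * fls_nth (Tent n (pts @ [(1, l, 0)]) mu p \<alpha> \<beta> k) m"
    (is "?lhs = fls_nth ?T m - _ * fls_nth ?C m")
proof -
  \<comment> \<open>Uninstantiated, \<open>Tent_snoc_affine\<close> loops: it rewrites its own \<open>x = 0\<close> instance.\<close>
  have "?lhs = fls_nth (?C - fls_const x * ?T) m * - inverse x"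
    using assms by (simp only: Tent_snoc_affine[OF assms(1), where x = x] diagent_def fls_mult_const_nth) simp
  also have "\<dots> = fls_nth ?T m - inverse x * fls_nth ?C m"
    using assms by (simp add: field_simps)
  finally show ?thesis .
qed

lemma Tent_snoc_diagent_tendsto_above:
  assumes "l < \<beta>"
  shows "((\<lambda>x. fls_nth (Tent n (pts @ [(1, l, x)]) mu p \<alpha> \<beta> k * fls_const (diagent l x \<beta>)) m)
    \<longlongrightarrow> fls_nth (Tent n pts (\<lambda>j. mu j + varpi n l j) p \<alpha> \<beta> k) m) at_infinity"
  by (rule tendsto_at_infinity_const_minus_inverse, rule eventually_mono[OF eventually_not_equal_at_infinity])
    (rule Tent_snoc_diagent_nth_above[OF assms])

theorem proposition2p26:
  fixes n :: nat and D0 :: "(int \<times> nat \<times> complex) list" and gN :: int and iN :: nat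
    and xN :: complex and mu :: "nat \<Rightarrow> int" and p :: "nat \<Rightarrow> nat \<Rightarrow> complex"
  assumes "n \<ge> 2"
    and "is_divisor n (D0 @ [(gN, iN, xN)]) mu"
    and "integrality n (D0 @ [(gN, iN, xN)]) mu"
    and "1 \<le> iN" and "iN \<le> n - 1"
    and "generic n (acoef n (D0 @ [(gN, iN, xN)]) mu) p"
  shows "\<forall>\<alpha>\<in>{1..n}. \<forall>\<beta>\<in>{1..n}. \<forall>k m.
     ((\<lambda>x. fls_nth (Tent n (D0 @ [(gN, iN, x)]) mu p \<alpha> \<beta> k * fls_const (diagent iN x \<beta>)) m)
        \<longlongrightarrow> fls_nth (Tent n D0 (\<lambda>j. mu j + varpi n iN j) p \<alpha> \<beta> k) m) at_infinity"
proof (intro ballI allI)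
  fix \<alpha> \<beta> k m
  have "gN = 1"
    using assms(2,4) by (auto simp: is_divisor_def)
  show "((\<lambda>x. fls_nth (Tent n (D0 @ [(gN, iN, x)]) mu p \<alpha> \<beta> k * fls_const (diagent iN x \<beta>)) m)
        \<longlongrightarrow> fls_nth (Tent n D0 (\<lambda>j. mu j + varpi n iN j) p \<alpha> \<beta> k) m) at_infinity"
  proof (cases "\<beta> \<le> iN")
    case True
    then show ?thesis
      by (simp add: \<open>gN = 1\<close> Tent_snoc_below diagent_def)
  next
    case False
    then show ?thesis
      unfolding \<open>gN = 1\<close> by (intro Tent_snoc_diagent_tendsto_above) simp
  qed
qed

end
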